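(* Let $n,k$ be positive integers. There exists a $k$--$\mathrm{MOFR}(2,2n;2)$ if and only if there exists an orthogonal array $\mathrm{OA}(2n,k,2,2)$.
   Context: A frequency rectangle of type $\mathrm{FR}(m,n;q)$ is an $m\times n$ array on a symbol set of size $q$ in which each symbol appears exactly $n/q$ times in each row and $m/q$ times in each column. Two frequency rectangles of the same type are orthogonal if upon superimposition each of the $q^2$ ordered pairs of symbols appears the same number of times. A $k$--$\mathrm{MOFR}(m,n;q)$ is a set of $k$ pairwise orthogonal frequency rectangles of type $\mathrm{FR}(m,n;q)$. An orthogonal array $\mathrm{OA}(N,k,q,t)$ is an $N\times k$ array on a symbol set of size $q$ such that in every $N\times t$ subarray each ordered $t$-tuple of symbols appears as a row the same number of times. *)

theory Defs
  imports Main
begin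

(* Arrays are functions nat => nat => nat, only the entries at row i < m and
   column j < n matter; the symbol set of size q is {0..<q}. *)

definition freq_rect :: "nat \<Rightarrow> nat \<Rightarrow> nat \<Rightarrow> (nat \<Rightarrow> nat \<Rightarrow> nat) \<Rightarrow> bool" where
  "freq_rect m n q A \<longleftrightarrow>
     (\<forall>i<m. \<forall>j<n. A i j < q) \<and>
     (\<forall>s<q. \<forall>i<m. card {j. j < n \<and> A i j = s} * q = n) \<and>
     (\<forall>s<q. \<forall>j<n. card {i. i < m \<and> A i j = s} * q = m)"

definition orth_fr :: "nat \<Rightarrow> nat \<Rightarrow> nat \<Rightarrow> (nat \<Rightarrow> nat \<Rightarrow> nat) \<Rightarrow> (nat \<Rightarrow> nat \<Rightarrow> nat) \<Rightarrow> bool" where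
  "orth_fr m n q A B \<longleftrightarrow>
     (\<exists>c. \<forall>a<q. \<forall>b<q.
        card {(i, j). i < m \<and> j < n \<and> A i j = a \<and> B i j = b} = c)"

definition MOFR :: "nat \<Rightarrow> nat \<Rightarrow> nat \<Rightarrow> nat \<Rightarrow> (nat \<Rightarrow> nat \<Rightarrow> nat \<Rightarrow> nat) \<Rightarrow> bool" where
  "MOFR k m n q F \<longleftrightarrow>
     (\<forall>l<k. freq_rect m n q (F l)) \<and>
     (\<forall>l<k. \<forall>l'<k. l \<noteq> l' \<longrightarrow> orth_fr m n q (F l) (F l'))"

definition orth_array :: "nat \<Rightarrow> nat \<Rightarrow> nat \<Rightarrow> nat \<Rightarrow> (nat \<Rightarrow> nat \<Rightarrow> nat) \<Rightarrow> bool" where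
  "orth_array N k q t A \<longleftrightarrow>
     (\<forall>r<N. \<forall>c<k. A r c < q) \<and>
     (\<forall>cs. distinct cs \<and> length cs = t \<and> set cs \<subseteq> {..<k} \<longrightarrow>
        (\<exists>lam. \<forall>u. length u = t \<and> set u \<subseteq> {..<q} \<longrightarrow>
           card {r. r < N \<and> map (A r) cs = u} = lam))"

end

theory Submission
  imports Defs
begin

(* In an FR(2,2n;2) every column holds both symbols, so the second row is the complement
   of the first, and the rectangle is determined by its first row, a balanced binary word.
   In two such rectangles the pair (a,b) occurs N(a,b) + N(1-a,1-b) times, where N counts
   the pairs in the first rows; together with the balance of the rows, orthogonality forces
   all four N(a,b) to be equal. Hence the first rows of a k-MOFR(2,2n;2) are the columns of
   an OA(2n,k,2,2), and conversely the columns of an OA with k >= 2 are balanced words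
   whose rectangles are pairwise orthogonal. For k = 1 the OA condition is vacuous and any
   balanced word gives a 1-MOFR. *)

definition balanced_word :: "nat \<Rightarrow> nat \<Rightarrow> (nat \<Rightarrow> nat) \<Rightarrow> bool" where
  "balanced_word M q w \<longleftrightarrow>
     (\<forall>j<M. w j < q) \<and> (\<forall>s<q. card {j. j < M \<and> w j = s} * q = M)"

definition uniform_pairs :: "nat \<Rightarrow> nat \<Rightarrow> (nat \<Rightarrow> nat) \<Rightarrow> (nat \<Rightarrow> nat) \<Rightarrow> bool" where
  "uniform_pairs M q v w \<longleftrightarrow>
     (\<exists>lam. \<forall>a<q. \<forall>b<q. card {j. j < M \<and> v j = a \<and> w j = b} = lam)"

lemma card_eq_sum_card_fibres:
  assumes "finite S" "finite T" "g ` S \<subseteq> T"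
  shows "card S = (\<Sum>y\<in>T. card {x \<in> S. g x = y})"
  using sum.group[OF assms, of "\<lambda>_. 1::nat"] by simp

lemma balanced_word_if_uniform_pairs:
  assumes pairs: "uniform_pairs M q v w"
    and v: "\<forall>j<M. v j < q" and w: "\<forall>j<M. w j < q"
  shows "balanced_word M q v"
proof -
  obtain lam where lam: "\<And>a b. a < q \<Longrightarrow> b < q \<Longrightarrow> card {j. j < M \<and> v j = a \<and> w j = b} = lam"
    using pairs unfolding uniform_pairs_def by blast
  have count: "card {j. j < M \<and> v j = s} = q * lam" if "s < q" for s
  proof -
    have "card {j. j < M \<and> v j = s} = (\<Sum>b<q. card {j \<in> {j. j < M \<and> v j = s}. w j = b})"
      by (rule card_eq_sum_card_fibres) (use w in auto)
    also have "\<dots> = (\<Sum>b<q. lam)"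
      by (rule sum.cong) (simp_all add: lam[OF that, symmetric] conj_assoc)
    finally show ?thesis by simp
  qed
  have "M = card {j. j < M}" by simp
  also have "\<dots> = (\<Sum>s<q. card {j \<in> {j. j < M}. v j = s})"
    by (rule card_eq_sum_card_fibres) (use v in auto)
  also have "\<dots> = (\<Sum>s<q. q * lam)"
    by (rule sum.cong) (simp_all add: count)
  finally have "M = q * q * lam" by simp
  then show ?thesis
    using v count unfolding balanced_word_def by simp
qed

lemma balanced_word_threshold: "balanced_word (2 * n) 2 (\<lambda>j. if j < n then 0 else 1)"
proof -
  have "{j. j < 2 * n \<and> (if j < n then 0 else 1) = (0::nat)} = {..<n}"
    "{j. j < 2 * n \<and> (if j < n then 0 else 1) = (1::nat)} = {n..<2 * n}"
    by auto
  then show ?thesis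
    unfolding balanced_word_def less_2_cases_iff by auto
qed

lemma card_two_rows:
  "card {(i, j). i < (2::nat) \<and> j < (M::nat) \<and> P i j} = card {j. j < M \<and> P 0 j} + card {j. j < M \<and> P 1 j}"
proof -
  have "{(i, j). i < (2::nat) \<and> j < M \<and> P i j} = Pair 0 ` {j. j < M \<and> P 0 j} \<union> Pair 1 ` {j. j < M \<and> P 1 j}"
    by (auto simp: less_2_cases_iff)
  moreover have "Pair (0::nat) ` {j. j < M \<and> P 0 j} \<inter> Pair 1 ` {j. j < M \<and> P 1 j} = {}"
    by auto
  ultimately show ?thesis
    by (simp add: card_Un_disjoint card_image inj_on_def)
qed

lemma card_binary_split:
  assumes "\<forall>j<(M::nat). w j < (2::nat)"
  shows "card {j. j < M \<and> P j} = card {j. j < M \<and> P j \<and> w j = 0} + card {j. j < M \<and> P j \<and> w j = 1}"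
proof -
  have "card {j. j < M \<and> P j} = (\<Sum>b<2. card {j \<in> {j. j < M \<and> P j}. w j = b})"
    by (rule card_eq_sum_card_fibres) (use assms in auto)
  then show ?thesis
    by (simp add: numeral_2_eq_2 conj_assoc)
qed

lemma freq_rect_two_rows_iff:
  "freq_rect 2 M 2 X \<longleftrightarrow> balanced_word M 2 (X 0) \<and> (\<forall>j<M. X 1 j = 1 - X 0 j)"
proof
  assume X: "freq_rect 2 M 2 X"
  have "X 1 j = 1 - X 0 j" if "j < M" for j
  proof -
    from X that have "X 0 j < 2" "X 1 j < 2" "card {i. i < 2 \<and> X i j = X 0 j} * 2 = 2"
      unfolding freq_rect_def by auto
    moreover have "{i. i < 2 \<and> X i j = X 0 j} = (if X 1 j = X 0 j then {0, 1} else {0})"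
      by (auto simp: less_2_cases_iff)
    ultimately show ?thesis
      by (cases "X 1 j = X 0 j") auto
  qed
  with X show "balanced_word M 2 (X 0) \<and> (\<forall>j<M. X 1 j = 1 - X 0 j)"
    unfolding freq_rect_def balanced_word_def by auto
next
  assume "balanced_word M 2 (X 0) \<and> (\<forall>j<M. X 1 j = 1 - X 0 j)"
  then have X0: "\<forall>j<M. X 0 j < 2" and row0: "\<forall>s<2. card {j. j < M \<and> X 0 j = s} * 2 = M"
    and X1: "\<forall>j<M. X 1 j = 1 - X 0 j"
    unfolding balanced_word_def by auto
  have row1: "card {j. j < M \<and> X 1 j = s} * 2 = M" if "s < 2" for s
  proof -
    have "{j. j < M \<and> X 1 j = s} = {j. j < M \<and> X 0 j = 1 - s}"
      using X0 X1 that by auto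
    then show ?thesis
      using row0 by simp
  qed
  have column: "card {i. i < 2 \<and> X i j = s} = 1" if "j < M" "s < 2" for j s
  proof -
    have "{i. i < 2 \<and> X i j = s} = (if X 0 j = s then {0} else {1})"
      using X0 X1 that by (auto simp: less_2_cases_iff)
    then show ?thesis by simp
  qed
  show "freq_rect 2 M 2 X"
    unfolding freq_rect_def
    using X0 X1 row0 row1 column by (auto simp: less_2_cases_iff)
qed

lemma binary_complement_eq_iff: "x < 2 \<Longrightarrow> a < 2 \<Longrightarrow> 1 - x = a \<longleftrightarrow> x = 1 - (a::nat)"
  by auto

lemma card_cells_complementary_rows:
  fixes X Y :: "nat \<Rightarrow> nat \<Rightarrow> nat"
  assumes "\<forall>j<M. X 0 j < 2 \<and> X 1 j = 1 - X 0 j"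
    and "\<forall>j<M. Y 0 j < 2 \<and> Y 1 j = 1 - Y 0 j"
    and "a < 2" "b < 2"
  shows "card {(i, j). i < 2 \<and> j < M \<and> X i j = a \<and> Y i j = b}
    = card {j. j < M \<and> X 0 j = a \<and> Y 0 j = b} + card {j. j < M \<and> X 0 j = 1 - a \<and> Y 0 j = 1 - b}"
proof -
  have "{j. j < M \<and> X 1 j = a \<and> Y 1 j = b} = {j. j < M \<and> X 0 j = 1 - a \<and> Y 0 j = 1 - b}"
    using assms by (auto simp: binary_complement_eq_iff)
  then show ?thesis
    by (simp add: card_two_rows)
qed

lemma orth_fr_two_rows_iff:
  assumes X: "freq_rect 2 M 2 X" and Y: "freq_rect 2 M 2 Y"
  shows "orth_fr 2 M 2 X Y \<longleftrightarrow> uniform_pairs M 2 (X 0) (Y 0)"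
proof -
  define N where "N a b = card {j. j < M \<and> X 0 j = a \<and> Y 0 j = b}" for a b
  have X0: "balanced_word M 2 (X 0)" and Y0: "balanced_word M 2 (Y 0)"
    and X1: "\<forall>j<M. X 1 j = 1 - X 0 j" and Y1: "\<forall>j<M. Y 1 j = 1 - Y 0 j"
    using X Y by (simp_all add: freq_rect_two_rows_iff)
  have cells: "card {(i, j). i < 2 \<and> j < M \<and> X i j = a \<and> Y i j = b} = N a b + N (1 - a) (1 - b)"
    if "a < 2" "b < 2" for a b
    unfolding N_def
    by (rule card_cells_complementary_rows) (use X0 Y0 X1 Y1 that in \<open>auto simp: balanced_word_def\<close>)
  show ?thesis
  proof
    assume "orth_fr 2 M 2 X Y"
    then obtain c where hc: "\<forall>a<2. \<forall>b<2. card {(i, j). i < 2 \<and> j < M \<and> X i j = a \<and> Y i j = b} = c"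
      unfolding orth_fr_def by blast
    have c: "N a b + N (1 - a) (1 - b) = c" if "a < 2" "b < 2" for a b
      using hc[rule_format, OF that] cells[OF that] by simp
    have margins: "(N s 0 + N s 1) * 2 = M" "(N 0 s + N 1 s) * 2 = M" if "s < 2" for s
    proof -
      have "card {j. j < M \<and> X 0 j = s} * 2 = M" "card {j. j < M \<and> Y 0 j = s} * 2 = M"
        using X0 Y0 that unfolding balanced_word_def by blast+
      moreover have "card {j. j < M \<and> X 0 j = s} = N s 0 + N s 1"
        using card_binary_split[of M "Y 0" "\<lambda>j. X 0 j = s"] Y0 by (simp add: N_def balanced_word_def)
      moreover have "card {j. j < M \<and> Y 0 j = s} = N 0 s + N 1 s"
        using card_binary_split[of M "X 0" "\<lambda>j. Y 0 j = s"] X0 by (simp add: N_def balanced_word_def conj_ac)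
      ultimately show "(N s 0 + N s 1) * 2 = M" "(N 0 s + N 1 s) * 2 = M"
        by simp_all
    qed
    have "N 0 1 = N 0 0" "N 1 0 = N 0 0" "N 1 1 = N 0 0"
      using c[of 0 0] c[of 0 1] margins[of 0] margins[of 1] by simp_all
    then have "N a b = N 0 0" if "a < 2" "b < 2" for a b
      using that by (auto simp: less_2_cases_iff)
    then show "uniform_pairs M 2 (X 0) (Y 0)"
      unfolding uniform_pairs_def N_def by blast
  next
    assume "uniform_pairs M 2 (X 0) (Y 0)"
    then obtain lam where "\<And>a b. a < 2 \<Longrightarrow> b < 2 \<Longrightarrow> N a b = lam"
      unfolding uniform_pairs_def N_def by blast
    then have "card {(i, j). i < 2 \<and> j < M \<and> X i j = a \<and> Y i j = b} = 2 * lam"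
      if "a < 2" "b < 2" for a b
      using cells[OF that] that by simp
    then show "orth_fr 2 M 2 X Y"
      unfolding orth_fr_def by blast
  qed
qed

lemma length_2_conv: "length xs = 2 \<longleftrightarrow> (\<exists>x y. xs = [x, y])"
  by (auto simp: numeral_2_eq_2 length_Suc_conv)

lemma orth_array_strength_two_iff:
  "orth_array N k q 2 A \<longleftrightarrow>
     (\<forall>r<N. \<forall>c<k. A r c < q) \<and>
     (\<forall>c<k. \<forall>c'<k. c \<noteq> c' \<longrightarrow> uniform_pairs N q (\<lambda>r. A r c) (\<lambda>r. A r c'))"
proof -
  have pairs: "(\<forall>u. length u = 2 \<and> set u \<subseteq> {..<q} \<longrightarrow> P u) \<longleftrightarrow> (\<forall>a<q. \<forall>b<q. P [a, b])"
    for P :: "nat list \<Rightarrow> bool"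
    by (auto simp: length_2_conv)
  have columns: "(\<forall>cs. distinct cs \<and> length cs = 2 \<and> set cs \<subseteq> {..<k} \<longrightarrow> P cs)
      \<longleftrightarrow> (\<forall>c<k. \<forall>c'<k. c \<noteq> c' \<longrightarrow> P [c, c'])"
    for P :: "nat list \<Rightarrow> bool"
    by (auto simp: length_2_conv)
  show ?thesis
    unfolding orth_array_def uniform_pairs_def pairs columns by simp
qed

lemma orth_array_column_balanced:
  assumes A: "orth_array N k q 2 A" and "2 \<le> k" "c < k"
  shows "balanced_word N q (\<lambda>r. A r c)"
proof -
  define c' where "c' = (if c = 0 then 1 else 0 :: nat)"
  have "c' < k" "c \<noteq> c'"
    using assms(2) unfolding c'_def by auto
  with A \<open>c < k\<close> show ?thesis
    unfolding orth_array_strength_two_iff by (blast intro: balanced_word_if_uniform_pairs)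
qed

lemma MOFR_imp_orth_array:
  assumes "MOFR k 2 M 2 F"
  shows "orth_array M k 2 2 (\<lambda>r c. F c 0 r)"
  using assms
  by (auto simp: MOFR_def orth_array_strength_two_iff freq_rect_two_rows_iff balanced_word_def
      orth_fr_two_rows_iff[symmetric])

lemma orth_array_imp_MOFR:
  assumes A: "orth_array M k 2 2 A" and "2 \<le> k"
  shows "MOFR k 2 M 2 (\<lambda>l i j. if i = 0 then A j l else 1 - A j l)"
proof -
  have "freq_rect 2 M 2 (\<lambda>i j. if i = 0 then A j l else 1 - A j l)" if "l < k" for l
    using orth_array_column_balanced[OF assms that] by (simp add: freq_rect_two_rows_iff)
  then show ?thesis
    using A by (auto simp: MOFR_def orth_fr_two_rows_iff orth_array_strength_two_iff)
qed

theorem mainTheorem3: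
  fixes n k :: nat
  assumes "0 < n" and "0 < k"
  shows "(\<exists>F. MOFR k 2 (2 * n) 2 F) \<longleftrightarrow> (\<exists>A. orth_array (2 * n) k 2 2 A)"
proof
  assume "\<exists>F. MOFR k 2 (2 * n) 2 F"
  then show "\<exists>A. orth_array (2 * n) k 2 2 A"
    using MOFR_imp_orth_array by blast
next
  assume A: "\<exists>A. orth_array (2 * n) k 2 2 A"
  show "\<exists>F. MOFR k 2 (2 * n) 2 F"
  proof (cases "k = 1")
    case True
    define w :: "nat \<Rightarrow> nat" where "w j = (if j < n then 0 else 1)" for j
    have "freq_rect 2 (2 * n) 2 (\<lambda>i j. if i = 0 then w j else 1 - w j)"
      using balanced_word_threshold[of n] by (simp add: freq_rect_two_rows_iff w_def)
    with True have "MOFR k 2 (2 * n) 2 (\<lambda>_ i j. if i = 0 then w j else 1 - w j)"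
      unfolding MOFR_def by blast
    then show ?thesis by blast
  next
    case False
    with \<open>0 < k\<close> A show ?thesis
      using orth_array_imp_MOFR by fastforce
  qed
qed

end
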